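(* Let $z_1,\ldots,z_N$ be distinct points on the unit circle in $\mathbb{C}$. Then there exists $p_0\in\{1,\ldots,N\}$ such that $$\prod_{q\ne p_0}|z_{p_0}-z_q|\le N.$$ *)

theory Defs
  imports "HOL-Analysis.Analysis"
begin

end

theory Submission
  imports Defs "HOL-Computational_Algebra.Polynomial"
begin

(*
  For distinct nodes z_p (p in A, |A| = n) of a field, Lagrange
  interpolation of x^(n-1) at the nodes is exact, since the interpolant has
  degree < n.  Comparing the coefficient of x^(n-1) gives the identity
      sum_p z_p^(n-1) / D_p = 1,    D_p = prod_(q ~= p) (z_p - z_q).
  On the unit circle every numerator has modulus 1, so the triangle
  inequality yields  sum_p 1/|D_p| >= 1,  and an average argument then
  produces some p with |D_p| <= n.
*)

definition nodal_poly :: "'b set \<Rightarrow> ('b \<Rightarrow> 'a::field) \<Rightarrow> 'b \<Rightarrow> 'a poly" where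
  "nodal_poly A z p = (\<Prod>q\<in>A - {p}. [:- z q, 1:])"

lemma poly_nodal_poly: "poly (nodal_poly A z p) x = (\<Prod>q\<in>A - {p}. (x - z q))"
  unfolding nodal_poly_def by (simp add: poly_prod)

lemma degree_nodal_poly:
  assumes "finite A" and "p \<in> A"
  shows "degree (nodal_poly A z p) = card A - 1"
proof -
  have "degree (nodal_poly A z p) = (\<Sum>q\<in>A - {p}. degree [:- z q, 1:])"
    unfolding nodal_poly_def by (rule degree_prod_eq_sum_degree) auto
  also have "\<dots> = card (A - {p})" by simp
  finally show ?thesis using assms by simp
qed

lemma top_coeff_nodal_poly:
  assumes "finite A" and "p \<in> A"
  shows "coeff (nodal_poly A z p) (card A - 1) = 1"
proof -
  have "lead_coeff (nodal_poly A z p) = 1"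
    unfolding nodal_poly_def by (simp add: lead_coeff_prod)
  thus ?thesis using degree_nodal_poly[OF assms, where z = z] by simp
qed

lemma poly_nodal_poly_other:
  assumes "finite A" "p \<in> A" "r \<in> A" "r \<noteq> p"
  shows "poly (nodal_poly A z p) (z r) = 0"
  unfolding poly_nodal_poly using assms by (intro prod_zero) auto

lemma node_differences_nonzero:
  fixes z :: "'b \<Rightarrow> 'a::field"
  assumes "finite A" "inj_on z A" "p \<in> A"
  shows "(\<Prod>q\<in>A - {p}. (z p - z q)) \<noteq> 0"
  using assms by (auto simp: inj_on_def)

text \<open>Lagrange interpolation of \<open>x ^ (card A - 1)\<close> at distinct nodes: the
  interpolant agrees with the monomial at \<open>card A\<close> points and both have
  degree below \<open>card A\<close>, hence they coincide.\<close>

lemma lagrange_interpolation_top_monomial: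
  fixes z :: "'b \<Rightarrow> 'a::field"
  assumes fin: "finite A" and ne: "A \<noteq> {}" and inj: "inj_on z A"
  defines "n \<equiv> card A"
  defines "D \<equiv> \<lambda>p. \<Prod>q\<in>A - {p}. (z p - z q)"
  shows "(\<Sum>p\<in>A. smult (z p ^ (n - 1) / D p) (nodal_poly A z p)) = monom 1 (n - 1)"
    (is "?L = _")
proof (rule poly_eqI_degree[of "z ` A"])
  have n_pos: "n \<ge> 1" using fin ne by (simp add: n_def Suc_le_eq card_gt_0_iff)
  have card_nodes: "card (z ` A) = n" using card_image[OF inj] by (simp add: n_def)
  show "poly ?L x = poly (monom 1 (n - 1)) x" if "x \<in> z ` A" for x
  proof -
    obtain r where r: "r \<in> A" and x: "x = z r" using \<open>x \<in> z ` A\<close> by blast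
    have "poly ?L (z r) = (\<Sum>p\<in>A. (z p ^ (n - 1) / D p) * poly (nodal_poly A z p) (z r))"
      by (simp add: poly_sum)
    also have "\<dots> = (z r ^ (n - 1) / D r) * poly (nodal_poly A z r) (z r)"
    proof (rule sum.remove[OF fin r, THEN trans])
      have "(\<Sum>p\<in>A - {r}. (z p ^ (n - 1) / D p) * poly (nodal_poly A z p) (z r)) = 0"
        using poly_nodal_poly_other[OF fin _ r] by (intro sum.neutral) auto
      thus "(z r ^ (n - 1) / D r) * poly (nodal_poly A z r) (z r)
          + (\<Sum>p\<in>A - {r}. (z p ^ (n - 1) / D p) * poly (nodal_poly A z p) (z r))
          = (z r ^ (n - 1) / D r) * poly (nodal_poly A z r) (z r)" by simp
    qed
    also have "\<dots> = z r ^ (n - 1)"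
      using node_differences_nonzero[OF fin inj r]
      by (simp add: poly_nodal_poly D_def)
    finally show ?thesis by (simp add: x poly_monom)
  qed
  have degree_term: "degree (smult c (nodal_poly A z p)) \<le> n - 1" if "p \<in> A" for c p
    using degree_smult_le[of c "nodal_poly A z p"] degree_nodal_poly[OF fin that, where z = z]
    unfolding n_def by linarith
  have "degree ?L \<le> n - 1" by (intro degree_sum_le fin degree_term)
  thus "degree ?L < card (z ` A)" using n_pos card_nodes by simp
  show "degree (monom (1::'a) (n - 1)) < card (z ` A)"
    using n_pos card_nodes by (simp add: degree_monom_eq)
qed

lemma lagrange_top_coefficient_identity:
  fixes z :: "'b \<Rightarrow> 'a::field"
  assumes fin: "finite A" and ne: "A \<noteq> {}" and inj: "inj_on z A"
  shows "(\<Sum>p\<in>A. z p ^ (card A - 1) / (\<Prod>q\<in>A - {p}. (z p - z q))) = 1"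
proof -
  have "1 = coeff (monom (1::'a) (card A - 1)) (card A - 1)" by simp
  also have "\<dots> = coeff (\<Sum>p\<in>A. smult (z p ^ (card A - 1) / (\<Prod>q\<in>A - {p}. (z p - z q)))
                      (nodal_poly A z p)) (card A - 1)"
    by (simp only: lagrange_interpolation_top_monomial[OF assms])
  also have "\<dots> = (\<Sum>p\<in>A. z p ^ (card A - 1) / (\<Prod>q\<in>A - {p}. (z p - z q)))"
    unfolding coeff_sum coeff_smult
    by (intro sum.cong refl) (metis top_coeff_nodal_poly[OF fin] mult_1_right)
  finally show ?thesis by simp
qed

lemma exists_le_card_of_reciprocal_sum:
  fixes x :: "'b \<Rightarrow> real"
  assumes fin: "finite A" and ne: "A \<noteq> {}"
    and sum_ge: "(\<Sum>p\<in>A. 1 / x p) \<ge> 1"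
  shows "\<exists>p\<in>A. x p \<le> real (card A)"
proof (rule ccontr)
  assume "\<not> ?thesis"
  hence big: "x p > real (card A)" if "p \<in> A" for p using that by auto
  have card_pos: "real (card A) > 0" using fin ne by (simp add: card_gt_0_iff)
  have "(\<Sum>p\<in>A. 1 / x p) < (\<Sum>p\<in>A. 1 / real (card A))"
  proof (rule sum_strict_mono[OF fin ne])
    fix p assume "p \<in> A"
    show "1 / x p < 1 / real (card A)"
      using card_pos big[OF \<open>p \<in> A\<close>] by (simp add: frac_less2)
  qed
  also have "\<dots> = 1" using card_pos by simp
  finally show False using sum_ge by simp
qed

theorem mainTheorem8:
  fixes N :: nat and z :: "nat \<Rightarrow> complex"
  assumes "N \<ge> 1"
    and "\<And>p. p \<in> {1..N} \<Longrightarrow> norm (z p) = 1"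
    and "inj_on z {1..N}"
  shows "\<exists>p0\<in>{1..N}. (\<Prod>q\<in>{1..N} - {p0}. norm (z p0 - z q)) \<le> real N"
proof -
  let ?A = "{1..N}"
  let ?D = "\<lambda>p. \<Prod>q\<in>?A - {p}. (z p - z q)"
  have ne: "?A \<noteq> {}" using assms(1) by simp
  have "1 = norm (\<Sum>p\<in>?A. z p ^ (card ?A - 1) / ?D p)"
    using lagrange_top_coefficient_identity[OF _ ne assms(3)] by simp
  also have "\<dots> \<le> (\<Sum>p\<in>?A. norm (z p ^ (card ?A - 1) / ?D p))" by (rule norm_sum)
  also have "\<dots> = (\<Sum>p\<in>?A. 1 / norm (?D p))"
    by (rule sum.cong) (auto simp: norm_divide norm_power assms(2))
  finally have "(\<Sum>p\<in>?A. 1 / norm (?D p)) \<ge> 1" .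
  then have "\<exists>p\<in>?A. norm (?D p) \<le> real (card ?A)"
    by (rule exists_le_card_of_reciprocal_sum[OF finite_atLeastAtMost ne])
  thus ?thesis by (auto simp: prod_norm)
qed

end
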